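(* Let $\mathbb B$ be a separable Banach space and $\mu$ a finite nonnegative Borel measure on $\mathbb B$. Then there exist a separable Banach space $\hat{\mathbb B}$ and a linear isometric embedding $\iota\colon\mathbb B\hookrightarrow\hat{\mathbb B}$ such that $\hat{\mathbb B}$ has the $\iota_\#\mu$-metric approximation property.
   Context: For a separable Banach space $\mathbb E$ and a finite nonnegative Borel measure $\nu$ on $\mathbb E$, $\mathbb E$ has the $\nu$-metric approximation property if there exists a sequence of finite-rank linear 1-Lipschitz maps $p_n\colon\mathbb E\to\mathbb E$ such that $\lim_n\|p_n(x)-x\|_{\mathbb E}=0$ for $\nu$-a.e. $x\in\mathbb E$. *)

theory Defs
  imports "HOL-Analysis.Analysis" "HOL-Probability.Probability"
begin

text \<open>The nu-metric approximation property for a (closed linear) subspace E of an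
ambient normed space, with nu a measure on the ambient Borel sets concentrated on E.\<close>

definition metric_approx_property :: "'b::real_normed_vector set \<Rightarrow> 'b measure \<Rightarrow> bool" where
  "metric_approx_property E \<nu> \<longleftrightarrow>
     (\<exists>p :: nat \<Rightarrow> 'b \<Rightarrow> 'b.
        (\<forall>n. (\<forall>x\<in>E. p n x \<in> E)
           \<and> (\<forall>x\<in>E. \<forall>y\<in>E. p n (x + y) = p n x + p n y)
           \<and> (\<forall>c::real. \<forall>x\<in>E. p n (c *\<^sub>R x) = c *\<^sub>R p n x)
           \<and> (\<exists>F. finite F \<and> p n ` E \<subseteq> span F)
           \<and> (\<forall>x\<in>E. \<forall>y\<in>E. norm (p n x - p n y) \<le> norm (x - y)))
      \<and> (AE x in \<nu>. (\<lambda>n. norm (p n x - x)) \<longlonglongrightarrow> 0))"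

end

theory Submission
  imports Defs
begin

text \<open>A separable normed space embeds isometrically into the space of bounded sequences
  (\<open>nat \<Rightarrow>\<^sub>C real\<close>) via a sequence of norming functionals, which Banach's proof of the
  Hahn--Banach theorem provides on separable spaces. On bounded sequences, precomposition with a
  map \<open>a :: nat \<Rightarrow> nat\<close> of finite range is a linear contraction of finite rank. Given a
  dense sequence s of the support of the measure, a can be chosen so that s 0, ..., s (N - 1) vary
  by at most \<delta> on each fibre of a; the operator then moves every point within \<delta> of one of
  them by at most 3 \<delta>. Choosing N and \<delta> for each n by Borel--Cantelli, these operators tend
  to the identity almost everywhere, and the closed span of the orbit of s under them is a
  separable subspace they leave invariant.\<close>

section \<open>Hahn--Banach on separable normed spaces\<close>

definition sublinear :: "('a::real_vector \<Rightarrow> real) \<Rightarrow> bool" where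
  "sublinear q \<longleftrightarrow> (\<forall>x y. q (x + y) \<le> q x + q y) \<and> (\<forall>c x. c \<ge> 0 \<longrightarrow> q (c *\<^sub>R x) = c * q x)"

lemma sublinear_add: "sublinear q \<Longrightarrow> q (x + y) \<le> q x + q y"
  unfolding sublinear_def by blast

lemma sublinear_scaleR: "sublinear q \<Longrightarrow> c \<ge> 0 \<Longrightarrow> q (c *\<^sub>R x) = c * q x"
  unfolding sublinear_def by blast

lemma sublinear_neg_le: "sublinear q \<Longrightarrow> - q (- x) \<le> q x"
  using sublinear_add[of q x "- x"] sublinear_scaleR[of q 0 0] by simp

lemma sublinear_norm: "sublinear norm"
  unfolding sublinear_def by (auto simp: norm_triangle_ineq)

lemma sublinear_limit:
  assumes "\<And>k. sublinear (Q k)" and lim: "\<And>x. (\<lambda>k. Q k x) \<longlonglongrightarrow> P x"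
  shows "sublinear P"
  unfolding sublinear_def
proof (intro conjI allI impI)
  fix x y
  show "P (x + y) \<le> P x + P y"
    by (rule LIMSEQ_le[OF lim tendsto_add[OF lim lim]]) (use assms(1) sublinear_add in blast)
next
  fix c :: real and x
  assume "c \<ge> 0"
  then have "Q k (c *\<^sub>R x) = c * Q k x" for k
    using assms(1) sublinear_scaleR by blast
  then have "(\<lambda>k. Q k (c *\<^sub>R x)) \<longlonglongrightarrow> c * P x"
    using tendsto_mult_left[OF lim] by simp
  then show "P (c *\<^sub>R x) = c * P x"
    using lim LIMSEQ_unique by blast
qed

lemma sublinear_odd_imp_linear:
  assumes P: "sublinear P" and odd: "\<And>x. P (- x) = - P x"
  shows "linear P"
proof (rule linearI)
  fix x y
  show "P (x + y) = P x + P y"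
    using sublinear_add[OF P, of x y] sublinear_add[OF P, of "- x" "- y"] odd[of "x + y"]
    by (simp add: odd)
next
  fix r x
  show "P (r *\<^sub>R x) = r *\<^sub>R P x"
  proof (cases "r \<ge> 0")
    case True
    then show ?thesis using sublinear_scaleR[OF P] by simp
  next
    case False
    then have "P (r *\<^sub>R x) = (- r) * P (- x)"
      using sublinear_scaleR[OF P, of "- r" "- x"] by simp
    then show ?thesis by (simp add: odd)
  qed
qed

text \<open>One step of Banach's proof of the Hahn--Banach theorem: q is lowered to a sublinear
  functional that is odd on the line through y.\<close>

definition flatten_along :: "('a::real_vector \<Rightarrow> real) \<Rightarrow> 'a \<Rightarrow> 'a \<Rightarrow> real" where
  "flatten_along q y x = (INF t\<in>{0<..}. q (x + t *\<^sub>R y) - t * q y)"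

lemma flatten_along_lower_bound:
  assumes q: "sublinear q" and "t > 0"
  shows "- q (- x) \<le> q (x + t *\<^sub>R y) - t * q y"
  using sublinear_add[OF q, of "x + t *\<^sub>R y" "- x"] sublinear_scaleR[OF q, of t y] assms(2)
  by simp

lemma flatten_along_le_shift:
  assumes q: "sublinear q" and "t > 0"
  shows "flatten_along q y x \<le> q (x + t *\<^sub>R y) - t * q y"
  unfolding flatten_along_def using assms flatten_along_lower_bound[OF q]
  by (intro cINF_lower bdd_belowI2) auto

lemma flatten_along_greatest:
  "(\<And>t. t > 0 \<Longrightarrow> b \<le> q (x + t *\<^sub>R y) - t * q y) \<Longrightarrow> b \<le> flatten_along q y x"
  unfolding flatten_along_def by (auto intro!: cINF_greatest)

lemma flatten_along_le: "sublinear q \<Longrightarrow> flatten_along q y x \<le> q x"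
  using flatten_along_le_shift[of q 1 y x] sublinear_add[of q x y] by simp

lemma flatten_along_neg_self:
  assumes q: "sublinear q"
  shows "flatten_along q y (- y) = - q y"
proof (rule antisym)
  show "flatten_along q y (- y) \<le> - q y"
    using flatten_along_le_shift[OF q, of 1 y "- y"] sublinear_scaleR[OF q, of 0 0] by simp
  show "- q y \<le> flatten_along q y (- y)"
    using flatten_along_lower_bound[OF q, of _ "- y" y] by (intro flatten_along_greatest) simp
qed

lemma flatten_along_add:
  assumes q: "sublinear q"
  shows "flatten_along q y (x1 + x2) \<le> flatten_along q y x1 + flatten_along q y x2"
proof -
  have "flatten_along q y (x1 + x2) - (q (x2 + t2 *\<^sub>R y) - t2 * q y) \<le> q (x1 + t1 *\<^sub>R y) - t1 * q y"
    if "t1 > 0" "t2 > 0" for t1 t2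
  proof -
    have shift: "x1 + x2 + (t1 + t2) *\<^sub>R y = (x1 + t1 *\<^sub>R y) + (x2 + t2 *\<^sub>R y)"
      by (simp add: algebra_simps)
    have "flatten_along q y (x1 + x2) \<le> q (x1 + x2 + (t1 + t2) *\<^sub>R y) - (t1 + t2) * q y"
      using that by (intro flatten_along_le_shift[OF q]) simp
    then have "flatten_along q y (x1 + x2) \<le> q ((x1 + t1 *\<^sub>R y) + (x2 + t2 *\<^sub>R y)) - (t1 + t2) * q y"
      unfolding shift .
    then show ?thesis
      using sublinear_add[OF q, of "x1 + t1 *\<^sub>R y" "x2 + t2 *\<^sub>R y"] by (simp add: algebra_simps)
  qed
  then have "flatten_along q y (x1 + x2) - (q (x2 + t2 *\<^sub>R y) - t2 * q y) \<le> flatten_along q y x1"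
    if "t2 > 0" for t2
    using that by (intro flatten_along_greatest) blast
  then have "flatten_along q y (x1 + x2) - flatten_along q y x1 \<le> flatten_along q y x2"
    by (intro flatten_along_greatest) (simp add: algebra_simps)
  then show ?thesis
    by simp
qed

lemma flatten_along_zero:
  assumes q: "sublinear q"
  shows "flatten_along q y 0 = 0"
proof -
  have "q 0 = 0"
    using sublinear_scaleR[OF q, of 0 0] by simp
  then show ?thesis
    using flatten_along_le[OF q, of y 0] flatten_along_lower_bound[OF q, of _ 0 y]
    by (intro antisym flatten_along_greatest) auto
qed

lemma flatten_along_scaleR:
  assumes q: "sublinear q" and c: "c > 0"
  shows "flatten_along q y (c *\<^sub>R x) = c * flatten_along q y x"
proof (rule antisym)
  have "flatten_along q y (c *\<^sub>R x) / c \<le> flatten_along q y x"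
  proof (rule flatten_along_greatest)
    fix t :: real assume t: "t > 0"
    have "flatten_along q y (c *\<^sub>R x) \<le> q (c *\<^sub>R x + (c * t) *\<^sub>R y) - (c * t) * q y"
      using c t by (intro flatten_along_le_shift[OF q]) simp
    moreover have "q (c *\<^sub>R x + (c * t) *\<^sub>R y) = c * q (x + t *\<^sub>R y)"
      using sublinear_scaleR[OF q, of c "x + t *\<^sub>R y"] c by (simp add: scaleR_add_right)
    ultimately show "flatten_along q y (c *\<^sub>R x) / c \<le> q (x + t *\<^sub>R y) - t * q y"
      using c by (simp add: field_simps)
  qed
  then show "flatten_along q y (c *\<^sub>R x) \<le> c * flatten_along q y x"
    using c by (simp add: field_simps)
  show "c * flatten_along q y x \<le> flatten_along q y (c *\<^sub>R x)"
  proof (rule flatten_along_greatest)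
    fix t :: real assume t: "t > 0"
    have "flatten_along q y x \<le> q (x + (t / c) *\<^sub>R y) - (t / c) * q y"
      using flatten_along_le_shift[OF q, of "t / c"] c t by simp
    moreover have "q (c *\<^sub>R x + t *\<^sub>R y) = c * q (x + (t / c) *\<^sub>R y)"
      using sublinear_scaleR[OF q, of c "x + (t / c) *\<^sub>R y"] c by (simp add: algebra_simps)
    ultimately show "c * flatten_along q y x \<le> q (c *\<^sub>R x + t *\<^sub>R y) - t * q y"
      using c by (simp add: field_simps mult_left_mono)
  qed
qed

lemma sublinear_flatten_along:
  assumes q: "sublinear q"
  shows "sublinear (flatten_along q y)"
  unfolding sublinear_def
proof (intro conjI allI impI)
  show "flatten_along q y (x1 + x2) \<le> flatten_along q y x1 + flatten_along q y x2" for x1 x2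
    using q by (rule flatten_along_add)
  show "flatten_along q y (c *\<^sub>R x) = c * flatten_along q y x" if "c \<ge> 0" for c x
    using that by (cases "c = 0") (simp_all add: flatten_along_zero[OF q] flatten_along_scaleR[OF q])
qed

primrec flatten_iter :: "(nat \<Rightarrow> 'a::real_normed_vector) \<Rightarrow> nat \<Rightarrow> 'a \<Rightarrow> real" where
  "flatten_iter e 0 = norm"
| "flatten_iter e (Suc k) = flatten_along (flatten_iter e k) (e k)"

lemma sublinear_flatten_iter: "sublinear (flatten_iter e k)"
  by (induction k) (auto simp: sublinear_norm sublinear_flatten_along)

lemma flatten_iter_Suc_le: "flatten_iter e (Suc k) x \<le> flatten_iter e k x"
  using flatten_along_le[OF sublinear_flatten_iter] by simp

lemma flatten_iter_le_norm: "flatten_iter e k x \<le> norm x"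
proof (induction k)
  case (Suc k)
  then show ?case using flatten_iter_Suc_le[of e k x] by linarith
qed simp

lemma flatten_iter_ge_neg_norm: "- norm x \<le> flatten_iter e k x"
  using sublinear_neg_le[OF sublinear_flatten_iter, of e k x] flatten_iter_le_norm[of e k "- x"]
  by simp

lemma separable_space_dense_sequence:
  assumes "separable_space (euclidean :: 'a topology)"
  obtains d :: "nat \<Rightarrow> 'a::topological_space" where "closure (range d) = UNIV"
proof -
  obtain C :: "'a set" where "countable C" "closure C = UNIV"
    using assms unfolding separable_space_def by auto
  moreover from this have "C \<noteq> {}"
    by auto
  ultimately show ?thesis
    using that range_from_nat_into by metis
qed

lemma sublinear_odd_from_dense:
  fixes P :: "'a::real_normed_vector \<Rightarrow> real"
  assumes P: "sublinear P" and P_le_norm: "\<And>x. P x \<le> norm x" and "closure D = UNIV"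
    and odd_D: "\<And>y. y \<in> D \<Longrightarrow> P y + P (- y) \<le> 0"
  shows "P (- x) = - P x"
proof -
  have "P x + P (- x) \<le> 0 + \<epsilon>" if "\<epsilon> > 0" for \<epsilon>
  proof -
    obtain y where "y \<in> D" and y: "dist y x < \<epsilon> / 2"
      using \<open>closure D = UNIV\<close> \<open>\<epsilon> > 0\<close> closure_approachable[of x D] by (metis UNIV_I half_gt_zero)
    have "P x \<le> P y + norm (x - y)"
      using sublinear_add[OF P, of y "x - y"] P_le_norm[of "x - y"] by simp
    moreover have "P (- x) \<le> P (- y) + norm (x - y)"
      using sublinear_add[OF P, of "- y" "y - x"] P_le_norm[of "y - x"] by (simp add: norm_minus_commute)
    moreover have "norm (x - y) < \<epsilon> / 2"
      using y by (simp add: dist_norm norm_minus_commute)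
    ultimately show ?thesis
      using odd_D[OF \<open>y \<in> D\<close>] by linarith
  qed
  then have "P x + P (- x) \<le> 0"
    by (rule field_le_epsilon)
  then show ?thesis
    using sublinear_neg_le[OF P, of x] by linarith
qed

text \<open>Banach's proof for separable spaces: flattening the norm successively along a and a dense
  sequence, the limit functional is odd on a dense set, hence everywhere, hence linear.\<close>

lemma norming_functional_exists:
  fixes d :: "nat \<Rightarrow> 'a::real_normed_vector" and a :: 'a
  assumes dense: "closure (range d) = UNIV"
  shows "\<exists>f. linear f \<and> (\<forall>x. \<bar>f x\<bar> \<le> norm x) \<and> f a = norm a"
proof -
  define e where "e = case_nat a d"
  define P where "P x = (INF k. flatten_iter e k x)" for x
  have bdd: "bdd_below (range (\<lambda>k. flatten_iter e k x))" for x
    using flatten_iter_ge_neg_norm by (intro bdd_belowI2)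
  have lim: "(\<lambda>k. flatten_iter e k x) \<longlonglongrightarrow> P x" for x
    unfolding P_def using bdd by (intro LIMSEQ_decseq_INF decseq_SucI flatten_iter_Suc_le)
  have P_le: "P x \<le> flatten_iter e k x" for x k
    unfolding P_def using bdd by (rule cINF_lower) simp
  have P: "sublinear P"
    using sublinear_flatten_iter lim by (rule sublinear_limit)
  have P_le_norm: "P x \<le> norm x" for x
    using P_le[of x 0] by simp
  have P_e: "P (- e k) \<le> - flatten_iter e k (e k)" for k
    using P_le[of "- e k" "Suc k"] flatten_along_neg_self[OF sublinear_flatten_iter[of e k]]
    by simp
  have "P y + P (- y) \<le> 0" if y: "y \<in> range d" for y
  proof -
    obtain k where "y = e (Suc k)"
      using y by (auto simp: e_def)
    then show ?thesis
      using P_le[of y "Suc k"] P_e[of "Suc k"] by simp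
  qed
  then have odd: "P (- x) = - P x" for x
    using sublinear_odd_from_dense[OF P P_le_norm dense] by blast
  have "linear P"
    using P odd by (rule sublinear_odd_imp_linear)
  moreover have "\<bar>P x\<bar> \<le> norm x" for x
    using P_le_norm[of x] P_le_norm[of "- x"] odd[of x] by auto
  moreover have "P a = norm a"
    using P_e[of 0] odd[of a] P_le_norm[of a] by (simp add: e_def)
  ultimately show ?thesis
    by blast
qed

lemma apply_Bcontfun_nat:
  fixes g :: "nat \<Rightarrow> 'b::real_normed_vector"
  assumes "\<And>j. norm (g j) \<le> b"
  shows "apply_bcontfun (Bcontfun g) = g"
  using assms by (intro Bcontfun_inverse bcontfun_normI) auto

lemma isometric_embedding_into_bcontfun:
  fixes d :: "nat \<Rightarrow> 'a::real_normed_vector"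
  assumes dense: "closure (range d) = UNIV"
  obtains \<iota> :: "'a \<Rightarrow> (nat \<Rightarrow>\<^sub>C real)" where "bounded_linear \<iota>" "\<And>x. norm (\<iota> x) = norm x"
proof -
  have "\<exists>f. linear f \<and> (\<forall>x. \<bar>f x\<bar> \<le> norm x) \<and> f (d k) = norm (d k)" for k
    using norming_functional_exists[OF dense] .
  then obtain f where f_lin: "\<And>k. linear (f k)" and f_le: "\<And>k x. \<bar>f k x\<bar> \<le> norm x"
    and f_d: "\<And>k. f k (d k) = norm (d k)"
    by metis
  define \<iota> where "\<iota> x = Bcontfun (\<lambda>k. f k x)" for x
  have \<iota>_apply: "apply_bcontfun (\<iota> x) = (\<lambda>k. f k x)" for x
    unfolding \<iota>_def using f_le by (intro apply_Bcontfun_nat) simp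
  have "linear \<iota>"
    by (rule linearI) (auto intro!: bcontfun_eqI simp: \<iota>_apply linear_add[OF f_lin] linear_scale[OF f_lin])
  moreover have \<iota>_norm: "norm (\<iota> x) = norm x" for x
  proof (rule antisym)
    show "norm (\<iota> x) \<le> norm x"
      by (rule norm_bound) (simp add: \<iota>_apply f_le)
    show "norm x \<le> norm (\<iota> x)"
    proof (rule field_le_epsilon)
      fix \<epsilon> :: real assume "\<epsilon> > 0"
      then obtain k where k: "dist (d k) x < \<epsilon> / 2"
        using dense closure_approachable[of x "range d"] by (metis UNIV_I half_gt_zero rangeE)
      have "norm x \<le> norm (d k) + norm (x - d k)"
        using norm_triangle_sub[of x "d k"] .
      also have "norm (d k) = f k x + f k (d k - x)"
        using f_d[of k] linear_diff[OF f_lin, of k "d k" x] by simp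
      also have "f k x \<le> norm (\<iota> x)"
        using norm_bounded[of "\<iota> x" k] by (simp add: \<iota>_apply)
      also have "f k (d k - x) \<le> norm (x - d k)"
        using f_le[of k "d k - x"] by (simp add: norm_minus_commute)
      finally show "norm x \<le> norm (\<iota> x) + \<epsilon>"
        using k by (simp add: dist_norm norm_minus_commute)
    qed
  qed
  ultimately have "bounded_linear \<iota>"
    by (intro bounded_linear_intro[where K=1]) (auto simp: linear_add linear_scale)
  with \<iota>_norm that show ?thesis
    by blast
qed

section \<open>Sampling operators on bounded sequences\<close>

definition sample :: "(nat \<Rightarrow> nat) \<Rightarrow> (nat \<Rightarrow>\<^sub>C real) \<Rightarrow> (nat \<Rightarrow>\<^sub>C real)" where
  "sample a y = Bcontfun (\<lambda>j. apply_bcontfun y (a j))"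

lemma apply_sample [simp]: "apply_bcontfun (sample a y) j = apply_bcontfun y (a j)"
  unfolding sample_def using norm_bounded[of y] by (subst apply_Bcontfun_nat) auto

lemma linear_sample: "linear (sample a)"
  by (rule linearI) (auto intro!: bcontfun_eqI)

lemma norm_sample_le: "norm (sample a y) \<le> norm y"
proof (rule norm_bound)
  fix j
  show "norm (apply_bcontfun (sample a y) j) \<le> norm y"
    using norm_bounded[of y "a j"] by simp
qed

lemma bounded_linear_sample: "bounded_linear (sample a)"
  using linear_sample norm_sample_le
  by (intro bounded_linear_intro[where K=1]) (auto simp: linear_add linear_scale)

lemma apply_bcontfun_sum:
  fixes g :: "'i \<Rightarrow> ('a::topological_space \<Rightarrow>\<^sub>C 'b::real_normed_vector)"
  shows "apply_bcontfun (sum g A) x = (\<Sum>s\<in>A. apply_bcontfun (g s) x)"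
  by (induction A rule: infinite_finite_induct) auto

definition indicator_bcontfun :: "nat set \<Rightarrow> (nat \<Rightarrow>\<^sub>C real)" where
  "indicator_bcontfun S = Bcontfun (indicator S)"

lemma apply_indicator_bcontfun [simp]: "apply_bcontfun (indicator_bcontfun S) = indicator S"
  unfolding indicator_bcontfun_def by (rule apply_Bcontfun_nat[where b=1]) (simp add: indicator_def)

lemma sample_in_span:
  assumes "finite (range a)"
  shows "sample a y \<in> span ((\<lambda>s. indicator_bcontfun (a -` {s})) ` range a)"
proof -
  have "sample a y = (\<Sum>s\<in>range a. apply_bcontfun y s *\<^sub>R indicator_bcontfun (a -` {s}))"
  proof (rule bcontfun_eqI)
    fix j
    have "apply_bcontfun (\<Sum>s\<in>range a. apply_bcontfun y s *\<^sub>R indicator_bcontfun (a -` {s})) j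
        = (\<Sum>s\<in>range a. apply_bcontfun y s * indicator (a -` {s}) j)"
      using assms by (simp add: apply_bcontfun_sum)
    also have "\<dots> = apply_bcontfun y (a j)"
      using assms by (simp add: indicator_def if_distrib cong: if_cong)
    finally show "apply_bcontfun (sample a y) j
        = apply_bcontfun (\<Sum>s\<in>range a. apply_bcontfun y s *\<^sub>R indicator_bcontfun (a -` {s})) j"
      by simp
  qed
  also have "\<dots> \<in> span ((\<lambda>s. indicator_bcontfun (a -` {s})) ` range a)"
    by (intro span_sum span_scale span_base) auto
  finally show ?thesis .
qed

lemma norm_sample_diff_le:
  fixes y z :: "nat \<Rightarrow>\<^sub>C real"
  assumes "dist z y < \<delta>" and "\<And>j. \<bar>apply_bcontfun z j - apply_bcontfun z (a j)\<bar> \<le> \<delta>"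
  shows "norm (sample a y - y) \<le> 3 * \<delta>"
proof (rule norm_bound)
  fix j
  have near: "\<bar>apply_bcontfun z k - apply_bcontfun y k\<bar> \<le> \<delta>" for k
    using dist_bounded[of z k y] assms(1) by (simp add: dist_real_def)
  show "norm (apply_bcontfun (sample a y - y) j) \<le> 3 * \<delta>"
    using near[of j] near[of "a j"] assms(2)[of j] by simp
qed

lemma finite_range_least_preimage:
  fixes v :: "nat \<Rightarrow> 'b"
  assumes "finite (range v)"
  shows "finite (range (\<lambda>j. LEAST k. v k = v j))" and "v (LEAST k. v k = v j) = v j"
proof -
  have "range (\<lambda>j. LEAST k. v k = v j) \<subseteq> (\<lambda>w. LEAST k. v k = w) ` range v"
    by blast
  then show "finite (range (\<lambda>j. LEAST k. v k = v j))"
    using assms by (rule finite_subset[OF _ finite_imageI])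
  show "v (LEAST k. v k = v j) = v j"
    by (rule LeastI[of _ j]) simp
qed

text \<open>Indices j are grouped by the vector of the values floor (z i j / \<delta>), i < N, which ranges
  over a finite set; a maps j to the least index of its group.\<close>

lemma finite_sampling_exists:
  fixes z :: "nat \<Rightarrow> (nat \<Rightarrow>\<^sub>C real)"
  assumes "\<delta> > 0"
  obtains a :: "nat \<Rightarrow> nat" where "finite (range a)"
    and "\<And>i j. i < N \<Longrightarrow> \<bar>apply_bcontfun (z i) j - apply_bcontfun (z i) (a j)\<bar> \<le> \<delta>"
proof -
  define R where "R = (\<Sum>i<N. norm (z i))"
  define v where "v j = restrict (\<lambda>i. \<lfloor>apply_bcontfun (z i) j / \<delta>\<rfloor>) {..<N}" for j
  define a where "a j = (LEAST k. v k = v j)" for j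
  have "v j \<in> {..<N} \<rightarrow>\<^sub>E {\<lfloor>- R / \<delta>\<rfloor> .. \<lfloor>R / \<delta>\<rfloor>}" for j
  proof (rule PiE_I)
    fix i assume i: "i \<in> {..<N}"
    have "\<bar>apply_bcontfun (z i) j\<bar> \<le> norm (z i)"
      using norm_bounded[of "z i" j] by simp
    also have "norm (z i) \<le> R"
      unfolding R_def using i by (intro member_le_sum) auto
    finally have "\<bar>apply_bcontfun (z i) j\<bar> \<le> R" .
    then have "- R \<le> apply_bcontfun (z i) j" "apply_bcontfun (z i) j \<le> R"
      by linarith+
    then have "- R / \<delta> \<le> apply_bcontfun (z i) j / \<delta>" "apply_bcontfun (z i) j / \<delta> \<le> R / \<delta>"
      using assms by (intro divide_right_mono; simp)+
    then show "v j i \<in> {\<lfloor>- R / \<delta>\<rfloor> .. \<lfloor>R / \<delta>\<rfloor>}"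
      using i by (auto simp: v_def intro: floor_mono)
  qed (simp add: v_def)
  then have "range v \<subseteq> {..<N} \<rightarrow>\<^sub>E {\<lfloor>- R / \<delta>\<rfloor> .. \<lfloor>R / \<delta>\<rfloor>}"
    by blast
  then have "finite (range v)"
    by (rule finite_subset) (simp add: finite_PiE)
  note a = finite_range_least_preimage[OF this, folded a_def]
  have "\<bar>apply_bcontfun (z i) j - apply_bcontfun (z i) (a j)\<bar> \<le> \<delta>" if "i < N" for i j
  proof -
    have "v (a j) = v j"
      by (rule a(2))
    then have "\<lfloor>apply_bcontfun (z i) j / \<delta>\<rfloor> = \<lfloor>apply_bcontfun (z i) (a j) / \<delta>\<rfloor>"
      using that by (metis v_def lessThan_iff restrict_apply')
    then have "\<bar>apply_bcontfun (z i) j / \<delta> - apply_bcontfun (z i) (a j) / \<delta>\<bar> < 1"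
      by linarith
    then show ?thesis
      using assms by (simp add: diff_divide_distrib[symmetric])
  qed
  with a(1) show ?thesis
    using that by blast
qed

section \<open>Invariant subspaces and almost everywhere approximation\<close>

lemma measure_outside_initial_balls_small:
  fixes \<nu> :: "'b::metric_space measure" and s :: "nat \<Rightarrow> 'b"
  assumes "finite_measure \<nu>" and sets: "sets \<nu> = sets borel"
    and AE_closure: "AE y in \<nu>. y \<in> closure (range s)" and "r > 0" "\<epsilon> > 0"
  obtains M where "measure \<nu> (- (\<Union>i<M. ball (s i) r)) < \<epsilon>"
proof -
  interpret finite_measure \<nu> by fact
  define A where "A M = - (\<Union>i<M. ball (s i) r)" for M
  have A_sets: "A M \<in> sets \<nu>" for M
    unfolding A_def sets by (intro borel_closed closed_Compl open_UN) auto
  have lim: "(\<lambda>M. measure \<nu> (A M)) \<longlonglongrightarrow> measure \<nu> (\<Inter>M. A M)"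
    by (intro finite_Lim_measure_decseq) (use A_sets in blast, auto simp: decseq_def A_def)
  have not_in: "y \<notin> (\<Inter>M. A M)" if y: "y \<in> closure (range s)" for y
  proof -
    obtain i where "dist (s i) y < r"
      using y \<open>r > 0\<close> closure_approachable[of y "range s"] by blast
    then show ?thesis
      by (auto simp: A_def intro!: exI[of _ "Suc i"])
  qed
  have "AE y in \<nu>. y \<notin> (\<Inter>M. A M)"
    using AE_closure not_in by (rule eventually_mono)
  then have "measure \<nu> (\<Inter>M. A M) = 0"
    using A_sets by (intro measure_eq_0_null_sets) (auto simp: AE_iff_null_sets)
  then show ?thesis
    using order_tendstoD(2)[OF lim, of \<epsilon>] \<open>\<epsilon> > 0\<close> that
    by (auto simp: A_def eventually_sequentially)
qed

lemma AE_eventually_near_initial_segment: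
  fixes \<nu> :: "'b::metric_space measure" and s :: "nat \<Rightarrow> 'b"
  assumes \<nu>: "finite_measure \<nu>" "sets \<nu> = sets borel" "AE y in \<nu>. y \<in> closure (range s)"
    and \<delta>: "\<And>n. \<delta> n > 0"
  obtains N where "AE y in \<nu>. eventually (\<lambda>n. \<exists>i<N n. dist (s i) y < \<delta> n) sequentially"
proof -
  interpret finite_measure \<nu> by fact
  define A where "A n M = - (\<Union>i<M. ball (s i) (\<delta> n))" for n M
  have "\<exists>M. measure \<nu> (A n M) < (1/2) ^ n" for n
  proof -
    have "(1/2::real) ^ n > 0"
      by simp
    then show ?thesis
      unfolding A_def using measure_outside_initial_balls_small[OF \<nu> \<delta>] by metis
  qed
  then obtain N where N: "\<And>n. measure \<nu> (A n (N n)) < (1/2) ^ n"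
    by metis
  have "AE y in \<nu>. eventually (\<lambda>n. y \<in> space \<nu> - A n (N n)) sequentially"
  proof (rule borel_cantelli_AE1)
    show "A n (N n) \<in> sets \<nu>" for n
      unfolding A_def \<nu>(2) by (intro borel_closed closed_Compl open_UN) auto
    show "summable (\<lambda>n. measure \<nu> (A n (N n)))"
      using N by (intro summable_comparison_test'[OF summable_geometric[of "1/2::real"]])
        (auto intro: less_imp_le)
  qed (simp add: less_top[symmetric])
  then have "AE y in \<nu>. eventually (\<lambda>n. \<exists>i<N n. dist (s i) y < \<delta> n) sequentially"
    by (rule eventually_mono) (auto simp: A_def elim!: eventually_mono)
  then show ?thesis
    using that by blast
qed

definition rat_span :: "'b::real_vector set \<Rightarrow> 'b set" where
  "rat_span C = (\<lambda>l. \<Sum>(r, c)\<leftarrow>l. r *\<^sub>R c) ` lists (\<rat> \<times> C)"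

lemma countable_rat_span: "countable C \<Longrightarrow> countable (rat_span C)"
  unfolding rat_span_def using countable_rat by (intro countable_image countable_lists countable_SIGMA)

lemma rat_span_subset_span: "rat_span C \<subseteq> span C"
proof -
  have "(\<Sum>(r, c)\<leftarrow>l. r *\<^sub>R c) \<in> span C" if "l \<in> lists (\<rat> \<times> C)" for l
    using that by (induction l) (auto simp: span_zero intro!: span_add span_scale intro: span_base)
  then show ?thesis
    unfolding rat_span_def by blast
qed

lemma subset_rat_span: "C \<subseteq> rat_span C"
  unfolding rat_span_def by (auto intro!: image_eqI[where x="[(1, c)]" for c])

lemma rat_span_add: "x \<in> rat_span C \<Longrightarrow> y \<in> rat_span C \<Longrightarrow> x + y \<in> rat_span C"
  unfolding rat_span_def by (auto intro!: image_eqI[where x="l1 @ l2" for l1 l2])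

lemma rat_span_scaleR:
  assumes r: "r \<in> \<rat>" and x: "x \<in> rat_span C"
  shows "r *\<^sub>R x \<in> rat_span C"
proof -
  obtain l where l: "l \<in> lists (\<rat> \<times> C)" "x = (\<Sum>(s, c)\<leftarrow>l. s *\<^sub>R c)"
    using x unfolding rat_span_def by blast
  have "r *\<^sub>R (\<Sum>(s, c)\<leftarrow>l. s *\<^sub>R c) = (\<Sum>(s, c)\<leftarrow>map (\<lambda>(s, c). (r * s, c)) l. s *\<^sub>R c)"
    by (induction l) (auto simp: scaleR_add_right)
  moreover have "map (\<lambda>(s, c). (r * s, c)) l \<in> lists (\<rat> \<times> C)"
    using l(1) r by (fastforce intro: Rats_mult)
  ultimately show ?thesis
    unfolding rat_span_def l(2) by (rule image_eqI)
qed

lemma subspace_closure_rat_span: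
  fixes C :: "'b::real_normed_vector set"
  shows "subspace (closure (rat_span C))"
  unfolding subspace_def
proof (intro conjI ballI allI)
  have "0 \<in> rat_span C"
    unfolding rat_span_def by (auto intro!: image_eqI[where x="[]"])
  then show "0 \<in> closure (rat_span C)"
    using closure_subset by blast
next
  fix x y assume "x \<in> closure (rat_span C)" "y \<in> closure (rat_span C)"
  then obtain f g where "\<And>n. f n \<in> rat_span C" "f \<longlonglongrightarrow> x" "\<And>n. g n \<in> rat_span C" "g \<longlonglongrightarrow> y"
    unfolding closure_sequential by blast
  then show "x + y \<in> closure (rat_span C)"
    unfolding closure_sequential
    by (intro exI[where x="\<lambda>n. f n + g n"]) (auto intro: rat_span_add tendsto_add)
next
  fix c :: real and x assume "x \<in> closure (rat_span C)"
  then obtain f where "\<And>n. f n \<in> rat_span C" "f \<longlonglongrightarrow> x"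
    unfolding closure_sequential by blast
  moreover obtain r where "\<And>n. r n \<in> \<rat>" "r \<longlonglongrightarrow> c"
    using Rats_closure_real closure_sequential by blast
  ultimately show "c *\<^sub>R x \<in> closure (rat_span C)"
    unfolding closure_sequential
    by (intro exI[where x="\<lambda>n. r n *\<^sub>R f n"]) (auto intro: rat_span_scaleR tendsto_scaleR)
qed

lemma closure_span_eq_closure_rat_span:
  fixes C :: "'b::real_normed_vector set"
  shows "closure (span C) = closure (rat_span C)"
proof (rule antisym)
  have "span C \<subseteq> closure (rat_span C)"
    using subset_rat_span closure_subset subspace_closure_rat_span by (intro span_minimal) auto
  then show "closure (span C) \<subseteq> closure (rat_span C)"
    by (intro closure_minimal) auto
  show "closure (rat_span C) \<subseteq> closure (span C)"
    using rat_span_subset_span by (rule closure_mono)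
qed

lemma separable_closure_span:
  fixes C :: "'b::real_normed_vector set"
  assumes "countable C"
  shows "separable_space (top_of_set (closure (span C)))"
  unfolding separable_space_def closure_span_eq_closure_rat_span
  using countable_rat_span[OF assms] closure_subset
  by (intro exI[where x="rat_span C"]) (auto simp: closure_of_subtopology Int_absorb1)

lemma invariant_closed_separable_subspace:
  fixes p :: "nat \<Rightarrow> 'b::real_normed_vector \<Rightarrow> 'b"
  assumes p: "\<And>n. bounded_linear (p n)" and "countable C"
  obtains E where "subspace E" "closed E" "separable_space (top_of_set E)" "C \<subseteq> E"
    "\<And>n. p n ` E \<subseteq> E"
proof -
  define orbit where "orbit = (\<lambda>(ns, c). foldr p ns c) ` (UNIV \<times> C)"
  define E where "E = closure (span orbit)"
  have "countable orbit"
    unfolding orbit_def using \<open>countable C\<close> by (intro countable_image countable_SIGMA) auto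
  have "C \<subseteq> orbit"
    unfolding orbit_def by (auto intro!: image_eqI[where x="([], c)" for c])
  have "p n ` E \<subseteq> E" for n
  proof -
    have "p n ` orbit \<subseteq> orbit"
      unfolding orbit_def by (auto intro!: image_eqI[where x="(n # ns, c)" for ns c])
    then have "p n ` span orbit \<subseteq> span orbit"
      using span_linear_image[OF bounded_linear.linear[OF p]] span_mono by metis
    then show ?thesis
      unfolding E_def using closure_subset
      by (intro image_closure_subset linear_continuous_on p) auto
  qed
  moreover have "C \<subseteq> E"
    unfolding E_def using \<open>C \<subseteq> orbit\<close> span_superset closure_subset by blast
  moreover have "subspace E"
    unfolding E_def closure_span_eq_closure_rat_span by (rule subspace_closure_rat_span)
  ultimately show ?thesis
    using that separable_closure_span[OF \<open>countable orbit\<close>] unfolding E_def by blast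
qed

lemma AE_sample_tendsto_id:
  fixes \<nu> :: "(nat \<Rightarrow>\<^sub>C real) measure" and s :: "nat \<Rightarrow> (nat \<Rightarrow>\<^sub>C real)"
  assumes "finite_measure \<nu>" "sets \<nu> = sets borel" "AE y in \<nu>. y \<in> closure (range s)"
  obtains a :: "nat \<Rightarrow> nat \<Rightarrow> nat" where "\<And>n. finite (range (a n))"
    "AE y in \<nu>. (\<lambda>n. norm (sample (a n) y - y)) \<longlonglongrightarrow> 0"
proof -
  define \<delta> :: "nat \<Rightarrow> real" where "\<delta> n = inverse (Suc n)" for n
  have \<delta>_pos: "\<delta> n > 0" for n
    unfolding \<delta>_def by simp
  have \<delta>_lim: "(\<lambda>n. 3 * \<delta> n) \<longlonglongrightarrow> 0"
    unfolding \<delta>_def using tendsto_mult_right_zero[OF LIMSEQ_inverse_real_of_nat] by simp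
  obtain N where N: "AE y in \<nu>. eventually (\<lambda>n. \<exists>i<N n. dist (s i) y < \<delta> n) sequentially"
    using AE_eventually_near_initial_segment[OF assms \<delta>_pos] .
  have "\<exists>a. finite (range a) \<and>
          (\<forall>i j. i < N n \<longrightarrow> \<bar>apply_bcontfun (s i) j - apply_bcontfun (s i) (a j)\<bar> \<le> \<delta> n)" for n
    using finite_sampling_exists[OF \<delta>_pos] by metis
  then obtain a where a_finite: "\<And>n. finite (range (a n))"
    and a_near: "\<And>n i j. i < N n \<Longrightarrow> \<bar>apply_bcontfun (s i) j - apply_bcontfun (s i) (a n j)\<bar> \<le> \<delta> n"
    by metis
  have "AE y in \<nu>. (\<lambda>n. norm (sample (a n) y - y)) \<longlonglongrightarrow> 0"
    using N
  proof (rule eventually_mono)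
    fix y
    assume "eventually (\<lambda>n. \<exists>i<N n. dist (s i) y < \<delta> n) sequentially"
    then have "eventually (\<lambda>n. norm (norm (sample (a n) y - y)) \<le> 3 * \<delta> n) sequentially"
      by (rule eventually_mono) (use a_near in \<open>auto intro: norm_sample_diff_le\<close>)
    then show "(\<lambda>n. norm (sample (a n) y - y)) \<longlonglongrightarrow> 0"
      using \<delta>_lim by (rule Lim_null_comparison)
  qed
  with a_finite that show ?thesis
    by blast
qed

lemma metric_approx_property_bcontfun:
  fixes \<nu> :: "(nat \<Rightarrow>\<^sub>C real) measure" and s :: "nat \<Rightarrow> (nat \<Rightarrow>\<^sub>C real)"
  assumes "finite_measure \<nu>" "sets \<nu> = sets borel" "AE y in \<nu>. y \<in> closure (range s)"
  obtains E where "subspace E" "closed E" "separable_space (top_of_set E)" "range s \<subseteq> E"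
    "metric_approx_property E \<nu>"
proof -
  obtain a :: "nat \<Rightarrow> nat \<Rightarrow> nat" where a_finite: "\<And>n. finite (range (a n))"
    and p_conv: "AE y in \<nu>. (\<lambda>n. norm (sample (a n) y - y)) \<longlonglongrightarrow> 0"
    using AE_sample_tendsto_id[OF assms] by blast
  define p where "p n = sample (a n)" for n
  have p_bounded: "bounded_linear (p n)" for n
    unfolding p_def by (rule bounded_linear_sample)
  obtain E where E: "subspace E" "closed E" "separable_space (top_of_set E)" "range s \<subseteq> E"
    and p_E: "\<And>n. p n ` E \<subseteq> E"
    by (rule invariant_closed_separable_subspace[of p "range s", OF p_bounded]) auto
  have "metric_approx_property E \<nu>"
    unfolding metric_approx_property_def
  proof (intro exI[where x=p] conjI allI ballI)
    fix n
    show "p n x \<in> E" if "x \<in> E" for x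
      using p_E that by blast
    show "p n (x + y) = p n x + p n y" "p n (c *\<^sub>R x) = c *\<^sub>R p n x" for x y c
      unfolding p_def by (simp_all add: linear_add[OF linear_sample] linear_scale[OF linear_sample])
    show "\<exists>F. finite F \<and> p n ` E \<subseteq> span F"
      using sample_in_span[OF a_finite[of n]] a_finite[of n] unfolding p_def
      by (intro exI[where x="(\<lambda>s. indicator_bcontfun (a n -` {s})) ` range (a n)"]) auto
    show "norm (p n x - p n y) \<le> norm (x - y)" for x y
      using norm_sample_le[of "a n" "x - y"] unfolding p_def by (simp add: linear_diff[OF linear_sample])
  next
    show "AE x in \<nu>. (\<lambda>n. norm (p n x - x)) \<longlonglongrightarrow> 0"
      unfolding p_def by (rule p_conv)
  qed
  with E that show ?thesis
    by blast
qed

lemma range_subset_closure_range_comp: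
  assumes "continuous_on UNIV f" and "closure (range d) = UNIV"
  shows "range f \<subseteq> closure (range (f \<circ> d))"
proof -
  have "f ` closure (range d) \<subseteq> closure (range (f \<circ> d))"
    using assms by (intro image_closure_subset) (auto intro: closure_subset[THEN subsetD])
  then show ?thesis
    using assms(2) by simp
qed

theorem lemma2p4:
  fixes \<mu> :: "'a::banach measure"
  assumes "separable_space (euclidean :: 'a topology)"
    and "finite_measure \<mu>"
    and "sets \<mu> = sets borel"
  shows "\<exists>(E :: (nat \<Rightarrow>\<^sub>C real) set) (\<iota> :: 'a \<Rightarrow> (nat \<Rightarrow>\<^sub>C real)).
           subspace E \<and> closed E \<and> separable_space (top_of_set E)
         \<and> linear \<iota> \<and> (\<forall>x. norm (\<iota> x) = norm x) \<and> range \<iota> \<subseteq> E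
         \<and> metric_approx_property E (distr \<mu> borel \<iota>)"
proof -
  obtain d :: "nat \<Rightarrow> 'a" where d: "closure (range d) = UNIV"
    using assms(1) separable_space_dense_sequence by blast
  obtain \<iota> :: "'a \<Rightarrow> (nat \<Rightarrow>\<^sub>C real)" where \<iota>: "bounded_linear \<iota>" "\<And>x. norm (\<iota> x) = norm x"
    using isometric_embedding_into_bcontfun[OF d] by blast
  have cont: "continuous_on UNIV \<iota>"
    using \<iota>(1) by (rule linear_continuous_on)
  then have meas: "\<iota> \<in> borel_measurable \<mu>"
    using measurable_cong_sets[OF assms(3) refl] by (auto intro: borel_measurable_continuous_onI)
  have range_\<iota>: "range \<iota> \<subseteq> closure (range (\<iota> \<circ> d))"
    using cont d by (rule range_subset_closure_range_comp)
  then have "AE y in distr \<mu> borel \<iota>. y \<in> closure (range (\<iota> \<circ> d))"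
    using meas by (subst AE_distr_iff) auto
  then obtain E where E: "subspace E" "closed E" "separable_space (top_of_set E)"
    "range (\<iota> \<circ> d) \<subseteq> E" "metric_approx_property E (distr \<mu> borel \<iota>)"
    using metric_approx_property_bcontfun[OF finite_measure.finite_measure_distr[OF assms(2) meas]
        sets_distr] by blast
  moreover have "range \<iota> \<subseteq> E"
    using range_\<iota> closure_minimal[OF E(4,2)] by blast
  ultimately show ?thesis
    using \<iota> bounded_linear.linear by (intro exI[where x=E] exI[where x=\<iota>]) simp
qed

end
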